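(* Let $n\geq 2$ be an integer, let $m\neq\pm1$ be a square-free integer, let $\sqrt[n]{m}$ denote a root of $X^n-m$, and let $M=\mathbb{Q}(\sqrt[n]{m})$ with ring of integers $\mathcal{O}_M$. Then $$\frac{n}{\gcd(n,m)}\cdot \mathcal{O}_M\subset \mathbb{Z}[\sqrt[n]{m}].$$ *)

theory Defs
  imports Complex_Main "HOL-Computational_Algebra.Polynomial" "HOL-Computational_Algebra.Squarefree"
begin

definition rat_adjoin :: "complex \<Rightarrow> complex set" where
  "rat_adjoin \<alpha> = {poly (map_poly of_rat p) \<alpha> / poly (map_poly of_rat q) \<alpha> | p q.
       poly (map_poly of_rat q) \<alpha> \<noteq> 0}"

definition ring_of_integers :: "complex \<Rightarrow> complex set" where
  "ring_of_integers \<alpha> = {x \<in> rat_adjoin \<alpha>. algebraic_int x}"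

definition int_adjoin :: "complex \<Rightarrow> complex set" where
  "int_adjoin \<alpha> = {poly (map_poly of_int p) \<alpha> | p. True}"

end

theory Submission
  imports Defs "Berlekamp_Zassenhaus.Factor_Bound" "Jordan_Normal_Form.Char_Poly"
begin

text \<open>Let g = gcd(n, m). The polynomial X^n - m is Eisenstein at every prime divisor of m, hence
  irreducible over Q: every x in Q(alpha) is f(alpha) with deg f < n, and the conjugates of alpha
  are the zeta^j alpha for a primitive n-th root of unity zeta. If x is integral, so is the trace
  of x alpha^(n-i), which is n m times the i-th coefficient of f. Hence
  x = (sum a_i alpha^i) / (n m) with integers a_i, and (n/g) x = (sum a_i alpha^i) / (g m) is
  integral. Finally, for a prime p with p | m and p^2 not dividing m, integrality of
  (sum a_i alpha^i) / p forces p | a_i for all i; since every prime factor of g m divides the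
  squarefree m, dividing out one prime at a time gives g m | a_i.\<close>

section \<open>Sums and products of algebraic integers\<close>

lemma algebraic_int_eigenvalue_of_int_mat:
  fixes A :: "int mat" and v :: "'a :: field_char_0 vec"
  assumes A: "A \<in> carrier_mat k k" and v: "v \<in> carrier_vec k" "v \<noteq> 0\<^sub>v k"
    and eigen: "map_mat of_int A *\<^sub>v v = x \<cdot>\<^sub>v v"
  shows "algebraic_int x"
proof -
  let ?B = "map_mat (of_int :: int \<Rightarrow> 'a) A"
  have B: "?B \<in> carrier_mat k k" using A by simp
  have "eigenvalue ?B x" unfolding eigenvalue_def eigenvector_def using B v eigen by auto
  hence "poly (char_poly ?B) x = 0" using eigenvalue_root_char_poly[OF B] by simp
  hence "poly (map_poly of_int (char_poly A)) x = 0" by (simp add: of_int_hom.char_poly_hom[OF A])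
  moreover have "lead_coeff (char_poly A) = 1" using degree_monic_char_poly[OF A] by simp
  ultimately show ?thesis unfolding algebraic_int_altdef_ipoly by blast
qed

inductive_set int_span :: "'a :: comm_ring_1 set \<Rightarrow> 'a set" for V where
  base: "v \<in> V \<Longrightarrow> v \<in> int_span V"
| zero: "0 \<in> int_span V"
| add: "a \<in> int_span V \<Longrightarrow> b \<in> int_span V \<Longrightarrow> a + b \<in> int_span V"
| uminus: "a \<in> int_span V \<Longrightarrow> - a \<in> int_span V"

lemma int_span_sum: "(\<And>i. i \<in> I \<Longrightarrow> f i \<in> int_span V) \<Longrightarrow> sum f I \<in> int_span V"
  by (induction I rule: infinite_finite_induct) (auto intro: int_span.intros)

lemma int_span_of_int_mult: "a \<in> int_span V \<Longrightarrow> of_int k * a \<in> int_span V"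
proof (cases k rule: int_cases)
  case (nonneg j)
  assume "a \<in> int_span V"
  hence "(\<Sum>_<j. a) \<in> int_span V" by (rule int_span_sum)
  thus ?thesis using nonneg by simp
next
  case (neg j)
  assume "a \<in> int_span V"
  hence "- (\<Sum>_<Suc j. a) \<in> int_span V" by (intro int_span.uminus int_span_sum)
  moreover have "of_int k * a = - (\<Sum>_<Suc j. a)" unfolding neg by (simp add: algebra_simps)
  ultimately show ?thesis by simp
qed

lemma int_span_mult_closed:
  assumes "\<And>v. v \<in> V \<Longrightarrow> c * v \<in> int_span V" and "a \<in> int_span V"
  shows "c * a \<in> int_span V"
  using assms(2) by induction (auto intro: assms(1) int_span.intros simp: distrib_left)

lemma int_span_mult:
  assumes a: "a \<in> int_span A" and b: "b \<in> int_span B"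
  shows "a * b \<in> int_span {u * w | u w. u \<in> A \<and> w \<in> B}"
proof -
  have "a * w \<in> int_span {u * w | u w. u \<in> A \<and> w \<in> B}" if "w \<in> B" for w
    using a by induction (use that in \<open>auto intro: int_span.intros simp: distrib_right\<close>)
  with b show ?thesis
    by induction (auto intro: int_span.intros simp: distrib_left)
qed

lemma int_span_finite_coeffs:
  assumes "finite V" and "a \<in> int_span V"
  obtains c where "a = (\<Sum>v\<in>V. of_int (c v) * v)"
proof -
  from assms(2) have "\<exists>c. a = (\<Sum>v\<in>V. of_int (c v) * v)"
  proof induction
    case (base v)
    have "(\<Sum>w\<in>V. of_int (if w = v then 1 else 0) * w) = (\<Sum>w\<in>V. if w = v then v else 0)"
      by (intro sum.cong) auto
    also have "\<dots> = v" using assms(1) base by simp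
    finally have "(\<Sum>w\<in>V. of_int (if w = v then 1 else 0) * w) = v" .
    thus ?case by metis
  next
    case zero
    show ?case by (intro exI[of _ "\<lambda>_. 0"]) simp
  next
    case (add a b)
    then obtain c d where "a = (\<Sum>v\<in>V. of_int (c v) * v)" "b = (\<Sum>v\<in>V. of_int (d v) * v)"
      by blast
    hence "a + b = (\<Sum>v\<in>V. of_int (c v + d v) * v)" by (simp add: sum.distrib distrib_right)
    thus ?case by (intro exI[of _ "\<lambda>v. c v + d v"])
  next
    case (uminus a)
    then obtain c where "a = (\<Sum>v\<in>V. of_int (c v) * v)" by blast
    hence "- a = (\<Sum>v\<in>V. of_int (- c v) * v)" by (simp add: sum_negf)
    thus ?case by (intro exI[of _ "\<lambda>v. - c v"])
  qed
  with that show ?thesis by blast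
qed

lemma algebraic_int_if_int_span_stable:
  fixes x :: "'a :: field_char_0"
  assumes fin: "finite V" and one: "1 \<in> V" and stable: "\<And>v. v \<in> V \<Longrightarrow> x * v \<in> int_span V"
  shows "algebraic_int x"
proof -
  obtain ws where ws: "distinct ws" "set ws = V" using finite_distinct_list[OF fin] by blast
  define k where "k = length ws"
  have sum_V: "(\<Sum>w\<in>V. f w) = (\<Sum>j<k. f (ws ! j))" for f :: "'a \<Rightarrow> 'a"
    unfolding ws(2)[symmetric] k_def using ws(1)
    by (simp add: sum.distinct_set_conv_list sum_list_sum_nth atLeast0LessThan)
  have "\<exists>c. x * ws ! i = (\<Sum>w\<in>V. of_int (c w) * w)" if "i < k" for i
    using int_span_finite_coeffs[OF fin stable] that ws(2) k_def by (metis nth_mem)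
  then obtain C where C: "\<And>i. i < k \<Longrightarrow> x * ws ! i = (\<Sum>w\<in>V. of_int (C i w) * w)"
    by metis
  define A :: "int mat" where "A = mat k k (\<lambda>(i, j). C i (ws ! j))"
  define v :: "'a vec" where "v = vec k (\<lambda>i. ws ! i)"
  have A: "A \<in> carrier_mat k k" and v: "v \<in> carrier_vec k" by (simp_all add: A_def v_def)
  have "v \<noteq> 0\<^sub>v k"
  proof
    assume "v = 0\<^sub>v k"
    obtain i where "i < k" "ws ! i = 1" using one ws k_def by (metis in_set_conv_nth)
    with \<open>v = 0\<^sub>v k\<close> show False by (metis index_vec index_zero_vec(1) one_neq_zero v_def)
  qed
  moreover have "map_mat of_int A *\<^sub>v v = x \<cdot>\<^sub>v v"
  proof (rule eq_vecI)
    fix i assume "i < dim_vec (x \<cdot>\<^sub>v v)"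
    hence i: "i < k" using v by simp
    have "(map_mat of_int A *\<^sub>v v) $ i = (\<Sum>j<k. of_int (C i (ws ! j)) * ws ! j)"
      using i by (simp add: A_def v_def scalar_prod_def atLeast0LessThan)
    also have "\<dots> = x * ws ! i" by (simp add: C[OF i] sum_V)
    finally show "(map_mat of_int A *\<^sub>v v) $ i = (x \<cdot>\<^sub>v v) $ i" using i by (simp add: v_def)
  qed (simp add: A_def v_def)
  ultimately show ?thesis using algebraic_int_eigenvalue_of_int_mat[OF A v] by blast
qed

lemma algebraic_int_powers_in_int_span:
  fixes x :: "'a :: field_char_0"
  assumes "algebraic_int x"
  obtains d where "d > 0" "\<And>k. x ^ k \<in> int_span ((\<lambda>i. x ^ i) ` {..<d})"
proof -
  from assms obtain p where p: "poly (map_poly of_int p) x = 0" "lead_coeff p = (1 :: int)"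
    unfolding algebraic_int_altdef_ipoly by blast
  define d where "d = degree p"
  define X where "X = (\<lambda>i. x ^ i) ` {..<d}"
  have "d > 0"
  proof (rule ccontr)
    assume "\<not> d > 0"
    hence "p = 1" using p(2) by (metis d_def degree_eq_zeroE gr0I lead_coeff_pCons(2) one_pCons pCons_0_0)
    thus False using p(1) by simp
  qed
  have "0 = (\<Sum>j\<le>d. of_int (poly.coeff p j) * x ^ j)"
    using p(1) by (simp add: poly_altdef d_def coeff_map_poly degree_map_poly)
  also have "\<dots> = (\<Sum>j<d. of_int (poly.coeff p j) * x ^ j) + x ^ d"
    using p(2) by (simp add: lessThan_Suc_atMost[symmetric] d_def)
  finally have "x ^ d = - (\<Sum>j<d. of_int (poly.coeff p j) * x ^ j)"
    by (simp add: eq_neg_iff_add_eq_0 add.commute)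
  also have "\<dots> \<in> int_span X"
    by (intro int_span.uminus int_span_sum int_span_of_int_mult int_span.base) (simp add: X_def)
  finally have top: "x ^ d \<in> int_span X" .
  have step: "x * v \<in> int_span X" if "v \<in> X" for v
  proof -
    from that obtain i where i: "i < d" "v = x ^ i" unfolding X_def by blast
    show ?thesis
    proof (cases "Suc i < d")
      case True
      hence "x * v \<in> X" using i unfolding X_def by (auto intro!: image_eqI[of _ _ "Suc i"])
      thus ?thesis by (rule int_span.base)
    next
      case False
      with i have "Suc i = d" by simp
      with i have "x * v = x ^ d" by (auto simp flip: power_Suc)
      thus ?thesis using top by simp
    qed
  qed
  have "x ^ k \<in> int_span X" for k
  proof (induction k)
    case 0
    show ?case using \<open>d > 0\<close> by (auto simp: X_def intro!: int_span.base image_eqI[of 1 _ 0])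
  next
    case (Suc k)
    thus ?case using int_span_mult_closed[OF step] by simp
  qed
  with \<open>d > 0\<close> show ?thesis using that X_def by blast
qed

lemma algebraic_int_pair_int_span:
  fixes x y :: "'a :: field_char_0"
  assumes "algebraic_int x" and "algebraic_int y"
  obtains V where "finite V" "1 \<in> V" "V \<subseteq> {x ^ i * y ^ j | i j. True}"
    "\<And>i j. x ^ i * y ^ j \<in> int_span V"
proof -
  obtain a where a: "a > 0" "\<And>i. x ^ i \<in> int_span ((\<lambda>i. x ^ i) ` {..<a})"
    using algebraic_int_powers_in_int_span[OF assms(1)] by blast
  obtain b where b: "b > 0" "\<And>j. y ^ j \<in> int_span ((\<lambda>j. y ^ j) ` {..<b})"
    using algebraic_int_powers_in_int_span[OF assms(2)] by blast
  define V where "V = {u * w | u w. u \<in> (\<lambda>i. x ^ i) ` {..<a} \<and> w \<in> (\<lambda>j. y ^ j) ` {..<b}}"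
  have "finite V" unfolding V_def by (intro finite_image_set2) auto
  moreover have "1 \<in> V" unfolding V_def using a(1) b(1) by force
  moreover have "V \<subseteq> {x ^ i * y ^ j | i j. True}" unfolding V_def by blast
  moreover have "x ^ i * y ^ j \<in> int_span V" for i j
    unfolding V_def by (rule int_span_mult[OF a(2) b(2)])
  ultimately show ?thesis using that by blast
qed

lemma algebraic_int_add [intro]:
  fixes x y :: "'a :: field_char_0"
  assumes "algebraic_int x" and "algebraic_int y"
  shows "algebraic_int (x + y)"
proof -
  obtain V where V: "finite V" "1 \<in> V" "V \<subseteq> {x ^ i * y ^ j | i j. True}"
    "\<And>i j. x ^ i * y ^ j \<in> int_span V"
    using algebraic_int_pair_int_span[OF assms] by blast
  show ?thesis
  proof (rule algebraic_int_if_int_span_stable[OF V(1,2)])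
    fix v assume "v \<in> V"
    then obtain i j where "v = x ^ i * y ^ j" using V(3) by blast
    hence "(x + y) * v = x ^ Suc i * y ^ j + x ^ i * y ^ Suc j" by (simp add: algebra_simps)
    thus "(x + y) * v \<in> int_span V" using int_span.add[OF V(4) V(4)] by (simp only:)
  qed
qed

lemma algebraic_int_mult [intro]:
  fixes x y :: "'a :: field_char_0"
  assumes "algebraic_int x" and "algebraic_int y"
  shows "algebraic_int (x * y)"
proof -
  obtain V where V: "finite V" "1 \<in> V" "V \<subseteq> {x ^ i * y ^ j | i j. True}"
    "\<And>i j. x ^ i * y ^ j \<in> int_span V"
    using algebraic_int_pair_int_span[OF assms] by blast
  show ?thesis
  proof (rule algebraic_int_if_int_span_stable[OF V(1,2)])
    fix v assume "v \<in> V"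
    then obtain i j where "v = x ^ i * y ^ j" using V(3) by blast
    hence "x * y * v = x ^ Suc i * y ^ Suc j" by (simp add: algebra_simps)
    thus "x * y * v \<in> int_span V" using V(4) by (simp only:)
  qed
qed

lemma algebraic_int_diff [intro]:
  "algebraic_int (x :: 'a :: field_char_0) \<Longrightarrow> algebraic_int y \<Longrightarrow> algebraic_int (x - y)"
  using algebraic_int_add[of x "- y"] by auto

lemma algebraic_int_power [intro]: "algebraic_int (x :: 'a :: field_char_0) \<Longrightarrow> algebraic_int (x ^ k)"
  by (induction k) auto

lemma algebraic_int_sum [intro]:
  "(\<And>i. i \<in> I \<Longrightarrow> algebraic_int (f i :: 'a :: field_char_0)) \<Longrightarrow> algebraic_int (sum f I)"
  by (induction I rule: infinite_finite_induct) auto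

lemma rat_in_Ints_if_algebraic_int:
  assumes "algebraic_int (of_rat r :: 'a :: field_char_0)"
  shows "r \<in> \<int>"
proof -
  have "(of_rat r :: 'a) \<in> \<rat>" by simp
  with assms have "(of_rat r :: 'a) \<in> \<int>" by (rule rational_algebraic_int_is_int)
  then obtain k where "(of_rat r :: 'a) = of_int k" by (elim Ints_cases)
  hence "(of_rat r :: 'a) = of_rat (of_int k)" by simp
  hence "r = of_int k" by (simp only: of_rat_eq_iff)
  thus ?thesis by simp
qed

section \<open>The pure polynomial X^n - c\<close>

definition pure_poly :: "nat \<Rightarrow> 'a :: comm_ring_1 \<Rightarrow> 'a poly" where
  "pure_poly n c = Polynomial.monom 1 n - [:c:]"

lemma poly_pure_poly [simp]: "poly (pure_poly n c) x = x ^ n - c"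
  by (simp add: pure_poly_def poly_monom)

lemma coeff_pure_poly:
  "poly.coeff (pure_poly n c) i = (if i = n then 1 else 0) - (if i = 0 then c else 0)"
  by (simp add: pure_poly_def coeff_monom coeff_pCons split: nat.split)

lemma degree_pure_poly: "n > 0 \<Longrightarrow> degree (pure_poly n c) = n"
  unfolding pure_poly_def diff_conv_add_uminus
  by (subst degree_add_eq_left) (simp_all add: degree_monom_eq)

lemma lead_coeff_pure_poly: "n > 0 \<Longrightarrow> lead_coeff (pure_poly n c) = 1"
  by (simp add: degree_pure_poly coeff_pure_poly)

lemma (in comm_ring_hom) map_poly_pure_poly: "map_poly hom (pure_poly n c) = pure_poly n (hom c)"
  by (rule poly_eqI) (simp add: coeff_pure_poly coeff_map_poly hom_distribs)

lemma algebraic_int_pure_root: "n > 0 \<Longrightarrow> (\<alpha> :: 'a :: field_char_0) ^ n = of_int m \<Longrightarrow> algebraic_int \<alpha>"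
  unfolding algebraic_int_altdef_ipoly
  by (intro exI[of _ "pure_poly n m"]) (simp add: of_int_hom.map_poly_pure_poly lead_coeff_pure_poly)

lemma pure_poly_factor_degree:
  fixes g h :: "int poly"
  assumes gh: "g * h = pure_poly n m" and p: "prime p"
    and g0: "p dvd poly.coeff g 0" and h0: "\<not> p dvd poly.coeff h 0"
  shows "n \<le> degree g"
proof (rule ccontr)
  assume "\<not> n \<le> degree g"
  hence dg: "degree g < n" by simp
  have "lead_coeff g * lead_coeff h = 1"
    using gh dg by (simp flip: lead_coeff_mult add: lead_coeff_pure_poly)
  hence lead: "\<not> p dvd lead_coeff g"
    using p by (metis dvd_mult2 not_prime_unit)
  define i where "i = (LEAST i. \<not> p dvd poly.coeff g i)"
  have gi: "\<not> p dvd poly.coeff g i"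
    unfolding i_def by (rule LeastI[of "\<lambda>i. \<not> p dvd poly.coeff g i", OF lead])
  have "i \<le> degree g"
    unfolding i_def by (rule Least_le[of "\<lambda>i. \<not> p dvd poly.coeff g i", OF lead])
  have low: "p dvd poly.coeff g k" if "k < i" for k
    using not_less_Least[of k] that unfolding i_def by blast
  have "i \<noteq> 0"
  proof
    assume "i = 0"
    with g0 gi show False by simp
  qed
  with \<open>i \<le> degree g\<close> dg have "0 = poly.coeff (g * h) i" by (simp add: gh coeff_pure_poly)
  also have "\<dots> = (\<Sum>k<i. poly.coeff g k * poly.coeff h (i - k)) + poly.coeff g i * poly.coeff h 0"
    by (simp add: coeff_mult lessThan_Suc_atMost[symmetric])
  finally have "poly.coeff g i * poly.coeff h 0 = - (\<Sum>k<i. poly.coeff g k * poly.coeff h (i - k))"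
    by (simp add: eq_neg_iff_add_eq_0 add.commute)
  moreover have "p dvd (\<Sum>k<i. poly.coeff g k * poly.coeff h (i - k))"
    by (intro dvd_sum dvd_mult2 low) simp
  ultimately have "p dvd poly.coeff g i * poly.coeff h 0" by simp
  thus False using p gi h0 by (simp add: prime_dvd_mult_iff)
qed

lemma irreducible\<^sub>d_pure_poly:
  fixes m p :: int
  assumes n: "n > 0" and p: "prime p" "p dvd m" "\<not> p\<^sup>2 dvd m"
  shows "irreducible\<^sub>d (pure_poly n m)"
proof (rule irreducible\<^sub>dI)
  show "degree (pure_poly n m) > 0" using n by (simp add: degree_pure_poly)
next
  fix g h :: "int poly"
  assume dg: "degree g < degree (pure_poly n m)" and dh: "degree h < degree (pure_poly n m)"
    and gh: "pure_poly n m = g * h"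
  have "poly.coeff g 0 * poly.coeff h 0 = - m"
    using arg_cong[OF gh, of "\<lambda>f. poly.coeff f 0"] n by (simp add: coeff_mult_0 coeff_pure_poly)
  hence "p dvd poly.coeff g 0 * poly.coeff h 0" and "\<not> p * p dvd poly.coeff g 0 * poly.coeff h 0"
    using p(2,3) by (simp_all add: power2_eq_square)
  hence "p dvd poly.coeff g 0 \<and> \<not> p dvd poly.coeff h 0 \<or> p dvd poly.coeff h 0 \<and> \<not> p dvd poly.coeff g 0"
    using p(1) by (metis mult_dvd_mono prime_dvd_mult_iff)
  moreover have "degree g < n" "degree h < n" using dg dh n by (simp_all add: degree_pure_poly)
  moreover have "h * g = pure_poly n m" using gh by (simp add: mult.commute)
  ultimately show False
    using pure_poly_factor_degree[of g h n m p] pure_poly_factor_degree[of h g n m p] gh p(1)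
    by linarith
qed

corollary irreducible_pure_poly_rat:
  fixes m :: int
  assumes "n > 0" and "squarefree m" and "\<not> is_unit m"
  shows "irreducible (pure_poly n (of_int m) :: rat poly)"
proof -
  have "m \<noteq> 0" using assms(2) by auto
  with assms(3) obtain p where p: "prime p" "p dvd m" by (metis prime_divisor_exists)
  moreover have "\<not> p\<^sup>2 dvd m" using squarefreeD[OF assms(2)] p(1) not_prime_unit by blast
  ultimately have "irreducible\<^sub>d (pure_poly n m)" by (rule irreducible\<^sub>d_pure_poly[OF assms(1)])
  from irreducible\<^sub>d_int_rat[OF this] show ?thesis by (simp add: of_int_hom.map_poly_pure_poly)
qed

section \<open>Simple algebraic extensions of the rationals\<close>

abbreviation rpoly :: "rat poly \<Rightarrow> 'a :: field_char_0 \<Rightarrow> 'a" where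
  "rpoly f \<equiv> poly (map_poly of_rat f)"

interpretation of_rat_poly_hom: map_poly_comm_ring_hom "of_rat :: rat \<Rightarrow> 'a :: field_char_0" ..

lemma rpoly_add: "rpoly (f + g) x = rpoly f x + rpoly g x"
  and rpoly_mult: "rpoly (f * g) x = rpoly f x * rpoly g x"
  and rpoly_pcompose: "rpoly (pcompose (map_poly of_int h) f) x = poly (map_poly of_int h) (rpoly f x)"
  by (simp_all add: hom_distribs poly_pcompose map_poly_map_poly o_def)

lemma coprime_root_imp_rpoly_inverse:
  fixes \<alpha> :: "'a :: field_char_0"
  assumes "coprime p q" and "rpoly p \<alpha> = 0"
  obtains t where "rpoly q \<alpha> * rpoly t \<alpha> = 1"
proof -
  define s t where "s = fst (bezout_coefficients p q)" and "t = snd (bezout_coefficients p q)"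
  have "s * p + q * t = 1"
    using bezout_coefficients_fst_snd[of p q] assms(1) by (simp add: s_def t_def mult.commute)
  hence "rpoly (s * p + q * t) \<alpha> = 1" by simp
  with assms(2) have "rpoly q \<alpha> * rpoly t \<alpha> = 1" by (simp add: rpoly_add rpoly_mult)
  thus ?thesis by (rule that)
qed

lemma irreducible_dvd_if_root:
  fixes \<alpha> :: "'a :: field_char_0"
  assumes "irreducible p" and "rpoly p \<alpha> = 0" and "rpoly q \<alpha> = 0"
  shows "p dvd q"
proof (rule ccontr)
  assume "\<not> p dvd q"
  with assms(1) have "coprime p q" by (simp add: prime_elem_imp_coprime irreducible_imp_prime_elem)
  then obtain t where "rpoly q \<alpha> * rpoly t \<alpha> = 1" using coprime_root_imp_rpoly_inverse assms(2) by blast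
  with assms(3) show False by simp
qed

lemma algebraic_int_conjugate:
  fixes \<alpha> \<beta> :: "'a :: field_char_0"
  assumes p: "irreducible p" "rpoly p \<alpha> = 0" "rpoly p \<beta> = 0" and int: "algebraic_int (rpoly f \<alpha>)"
  shows "algebraic_int (rpoly f \<beta>)"
proof -
  from int obtain h where h: "poly (map_poly of_int h) (rpoly f \<alpha>) = 0" "lead_coeff h = 1"
    unfolding algebraic_int_altdef_ipoly by blast
  have "p dvd pcompose (map_poly of_int h) f"
    using irreducible_dvd_if_root[OF p(1,2)] h(1) by (simp add: rpoly_pcompose)
  hence "rpoly (pcompose (map_poly of_int h) f) \<beta> = 0" using p(3) by (auto simp: rpoly_mult)
  hence "poly (map_poly of_int h) (rpoly f \<beta>) = 0" by (simp add: rpoly_pcompose)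
  with h(2) show ?thesis unfolding algebraic_int_altdef_ipoly by blast
qed

lemma rat_adjoin_reduced_rep:
  assumes p: "irreducible p" "rpoly p \<alpha> = 0" and "x \<in> rat_adjoin \<alpha>"
  obtains f where "degree f < degree p" "x = rpoly f \<alpha>"
proof -
  from assms(3) obtain a b where x: "x = rpoly a \<alpha> / rpoly b \<alpha>" and b: "rpoly b \<alpha> \<noteq> 0"
    unfolding rat_adjoin_def by blast
  have "\<not> p dvd b" using b p(2) by (auto simp: rpoly_mult elim!: dvdE)
  with p(1) have "coprime p b" by (simp add: prime_elem_imp_coprime irreducible_imp_prime_elem)
  then obtain t where t: "rpoly b \<alpha> * rpoly t \<alpha> = 1"
    using coprime_root_imp_rpoly_inverse p(2) by blast
  have "inverse (rpoly b \<alpha>) = rpoly t \<alpha>" using t by (rule inverse_unique)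
  hence "x = rpoly (a * t) \<alpha>" unfolding x rpoly_mult divide_inverse by simp
  define f where "f = (a * t) mod p"
  note \<open>x = rpoly (a * t) \<alpha>\<close>
  also have "rpoly (a * t) \<alpha> = rpoly ((a * t) div p * p + f) \<alpha>" by (simp add: f_def)
  also have "\<dots> = rpoly f \<alpha>" using p(2) by (simp add: rpoly_add rpoly_mult)
  finally have "x = rpoly f \<alpha>" .
  moreover have "degree f < degree p"
  proof (cases "f = 0")
    case True
    thus ?thesis using p(1) irreducible\<^sub>dD(1) irreducible_connect_field by fastforce
  next
    case False
    thus ?thesis using p(1) by (auto simp: f_def intro: degree_mod_less')
  qed
  ultimately show ?thesis using that by blast
qed

section \<open>Traces in a pure extension\<close>

definition prim_root_unity :: "nat \<Rightarrow> complex" where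
  "prim_root_unity n = cis (2 * pi / real n)"

lemma prim_root_unity_power: "prim_root_unity n ^ k = cis (2 * pi * real k / real n)"
  unfolding prim_root_unity_def DeMoivre by (simp add: field_simps)

lemma prim_root_unity_power_eq_1_iff:
  assumes "n > 0"
  shows "prim_root_unity n ^ k = 1 \<longleftrightarrow> n dvd k"
proof
  assume "prim_root_unity n ^ k = 1"
  hence "cos (2 * pi * real k / real n) = 1"
    unfolding prim_root_unity_power by (metis cis.sel(1) one_complex.sel(1))
  then obtain j :: int where "2 * pi * real k / real n = of_int j * 2 * pi"
    using cos_one_2pi_int by blast
  hence "real k = of_int j * real n" using assms by (simp add: field_simps)
  hence "int k = j * int n" by (metis of_int_eq_iff of_int_mult of_int_of_nat_eq)
  thus "n dvd k" by (metis dvd_triv_right int_dvd_int_iff)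
next
  assume "n dvd k"
  then obtain q where "k = n * q" ..
  thus "prim_root_unity n ^ k = 1"
    using assms by (simp add: power_mult prim_root_unity_power)
qed

lemma sum_prim_root_unity_powers:
  assumes "n > 0"
  shows "(\<Sum>j<n. (prim_root_unity n ^ e) ^ j) = (if n dvd e then of_nat n else 0)"
proof (cases "n dvd e")
  case True
  hence "prim_root_unity n ^ e = 1" using assms by (simp add: prim_root_unity_power_eq_1_iff)
  thus ?thesis using True by simp
next
  case False
  hence "prim_root_unity n ^ e \<noteq> 1" using assms by (simp add: prim_root_unity_power_eq_1_iff)
  moreover have "(prim_root_unity n ^ e) ^ n = 1"
  proof -
    have "(prim_root_unity n ^ e) ^ n = (prim_root_unity n ^ n) ^ e"
      by (simp flip: power_mult add: mult.commute)
    also have "prim_root_unity n ^ n = 1" using assms by (simp add: prim_root_unity_power_eq_1_iff)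
    finally show ?thesis by simp
  qed
  ultimately show ?thesis using False by (simp add: geometric_sum)
qed

lemma poly_as_sum_lessThan:
  fixes f :: "'a :: comm_semiring_1 poly"
  assumes "degree f < n"
  shows "poly f z = (\<Sum>k<n. poly.coeff f k * z ^ k)"
  unfolding poly_altdef using assms by (intro sum.mono_neutral_left) (auto simp: coeff_eq_0)

lemma dvd_add_diff_iff_eq:
  fixes i k n :: nat
  assumes "k < n" "i < n"
  shows "n dvd k + n - i \<longleftrightarrow> k = i"
proof (cases "i \<le> k")
  case True
  hence "k + n - i = n + (k - i)" by simp
  hence "n dvd k + n - i \<longleftrightarrow> n dvd k - i" by (simp only: dvd_add_right_iff[OF dvd_refl])
  also have "\<dots> \<longleftrightarrow> k - i = 0"
    using assms nat_dvd_not_less[of "k - i" n] by (metis diff_le_self dvd_0_right gr0I le_less_trans)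
  finally show ?thesis using True by simp
next
  case False
  thus ?thesis using assms nat_dvd_not_less[of "k + n - i" n] by auto
qed

text \<open>The left-hand side is the trace of f(alpha) alpha^(n-i) from Q(alpha) to Q.\<close>

lemma sum_conjugates_pure:
  fixes f :: "complex poly"
  assumes n: "n > 0" and f: "degree f < n" and i: "i < n"
  defines "\<zeta> \<equiv> prim_root_unity n"
  shows "(\<Sum>j<n. poly f (\<zeta> ^ j * \<alpha>) * (\<zeta> ^ j * \<alpha>) ^ (n - i)) = of_nat n * poly.coeff f i * \<alpha> ^ n"
proof -
  have "(\<Sum>j<n. poly f (\<zeta> ^ j * \<alpha>) * (\<zeta> ^ j * \<alpha>) ^ (n - i))
      = (\<Sum>j<n. \<Sum>k<n. poly.coeff f k * \<alpha> ^ (k + (n - i)) * (\<zeta> ^ (k + (n - i))) ^ j)"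
  proof (intro sum.cong refl)
    fix j
    have "poly f (\<zeta> ^ j * \<alpha>) * (\<zeta> ^ j * \<alpha>) ^ (n - i)
        = (\<Sum>k<n. poly.coeff f k * (\<zeta> ^ j * \<alpha>) ^ (k + (n - i)))"
      by (simp add: poly_as_sum_lessThan[OF f] sum_distrib_right power_add mult.assoc)
    also have "\<dots> = (\<Sum>k<n. poly.coeff f k * \<alpha> ^ (k + (n - i)) * (\<zeta> ^ (k + (n - i))) ^ j)"
      by (intro sum.cong refl) (simp add: power_mult_distrib mult_ac flip: power_mult)
    finally show "poly f (\<zeta> ^ j * \<alpha>) * (\<zeta> ^ j * \<alpha>) ^ (n - i)
        = (\<Sum>k<n. poly.coeff f k * \<alpha> ^ (k + (n - i)) * (\<zeta> ^ (k + (n - i))) ^ j)" .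
  qed
  also have "\<dots> = (\<Sum>k<n. poly.coeff f k * \<alpha> ^ (k + (n - i)) * (\<Sum>j<n. (\<zeta> ^ (k + (n - i))) ^ j))"
    by (subst sum.swap) (simp add: sum_distrib_left)
  also have "\<dots> = (\<Sum>k<n. if k = i then of_nat n * poly.coeff f i * \<alpha> ^ n else 0)"
    using i n by (intro sum.cong) (auto simp: \<zeta>_def sum_prim_root_unity_powers dvd_add_diff_iff_eq)
  also have "\<dots> = of_nat n * poly.coeff f i * \<alpha> ^ n" using i by simp
  finally show ?thesis .
qed

lemma ring_of_integers_pure_rep:
  fixes \<alpha> :: complex
  assumes n: "n > 0" and m: "m \<noteq> 0" and irr: "irreducible (pure_poly n (of_int m) :: rat poly)"
    and \<alpha>: "\<alpha> ^ n = of_int m" and x: "x \<in> ring_of_integers \<alpha>"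
  obtains a where "x = (\<Sum>i<n. of_int (a i) * \<alpha> ^ i) / (of_nat n * of_int m)"
proof -
  have root_iff: "rpoly (pure_poly n (of_int m)) \<beta> = 0 \<longleftrightarrow> \<beta> ^ n = of_int m" for \<beta> :: complex
    by (simp add: of_rat_hom.map_poly_pure_poly)
  from x have "x \<in> rat_adjoin \<alpha>" and x_int: "algebraic_int x"
    unfolding ring_of_integers_def by auto
  then obtain f where f: "degree f < n" and x_f: "x = rpoly f \<alpha>"
    using rat_adjoin_reduced_rep[OF irr] root_iff \<alpha> n by (metis degree_pure_poly)
  define \<zeta> where "\<zeta> = prim_root_unity n"
  have conj: "(\<zeta> ^ j * \<alpha>) ^ n = of_int m" for j
  proof -
    have "(\<zeta> ^ j) ^ n = (\<zeta> ^ n) ^ j" by (simp flip: power_mult add: mult.commute)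
    also have "\<zeta> ^ n = 1" using n by (simp add: \<zeta>_def prim_root_unity_power_eq_1_iff)
    finally show ?thesis by (simp add: power_mult_distrib \<alpha>)
  qed
  have conj_int: "algebraic_int (rpoly f (\<zeta> ^ j * \<alpha>))" for j
    using algebraic_int_conjugate[OF irr, of \<alpha> "\<zeta> ^ j * \<alpha>" f] root_iff conj \<alpha> x_int x_f by simp
  have integral: "of_nat n * of_int m * poly.coeff f i \<in> \<int>" if i: "i < n" for i
  proof -
    have "algebraic_int (\<Sum>j<n. rpoly f (\<zeta> ^ j * \<alpha>) * (\<zeta> ^ j * \<alpha>) ^ (n - i))"
      by (intro algebraic_int_sum algebraic_int_mult algebraic_int_power conj_int
          algebraic_int_pure_root[OF n conj])
    also have "(\<Sum>j<n. rpoly f (\<zeta> ^ j * \<alpha>) * (\<zeta> ^ j * \<alpha>) ^ (n - i))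
        = of_rat (of_nat n * of_int m * poly.coeff f i)"
      using sum_conjugates_pure[of n "map_poly of_rat f" i \<alpha>] n f i
      by (simp add: \<zeta>_def \<alpha> coeff_map_poly of_rat_mult mult_ac)
    finally show ?thesis by (rule rat_in_Ints_if_algebraic_int)
  qed
  have coeff: "of_rat (poly.coeff f i) = (of_int \<lfloor>of_nat n * of_int m * poly.coeff f i\<rfloor> :: complex)
      / (of_nat n * of_int m)" if i: "i < n" for i
  proof -
    obtain k where k: "of_nat n * of_int m * poly.coeff f i = (of_int k :: rat)"
      using integral[OF i] by (elim Ints_cases)
    hence "poly.coeff f i = of_int k / (of_nat n * of_int m)" using n m by (simp add: field_simps)
    hence "of_rat (poly.coeff f i) = (of_int k / (of_nat n * of_int m) :: complex)"
      by (simp add: of_rat_divide of_rat_mult)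
    thus ?thesis using k by simp
  qed
  have "x = (\<Sum>i<n. of_rat (poly.coeff f i) * \<alpha> ^ i)"
    using poly_as_sum_lessThan[of "map_poly of_rat f" n] f x_f by (simp add: coeff_map_poly)
  also have "\<dots> = (\<Sum>i<n. of_int \<lfloor>of_nat n * of_int m * poly.coeff f i\<rfloor> * \<alpha> ^ i)
      / (of_nat n * of_int m)"
    by (simp add: coeff sum_divide_distrib)
  finally show ?thesis by (rule that)
qed

section \<open>Local integrality at the primes dividing m\<close>

lemma prime_dvd_if_algebraic_int_root_power:
  fixes \<alpha> :: "'a :: field_char_0" and b m p :: int
  assumes n: "n > 0" and \<alpha>: "\<alpha> ^ n = of_int m" and p: "prime p" "p dvd m" "\<not> p\<^sup>2 dvd m"
    and int: "algebraic_int (of_int b * \<alpha> ^ (n - 1) / of_int p)"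
  shows "p dvd b"
proof -
  obtain u where u: "m = p * u" using p(2) ..
  have "\<not> p dvd u" using p(3) u by (auto simp: power2_eq_square)
  define z where "z = of_int b * \<alpha> ^ (n - 1) / of_int p"
  have "(\<alpha> ^ (n - 1)) ^ n = (\<alpha> ^ n) ^ (n - 1)" by (simp flip: power_mult add: mult.commute)
  hence z_pow: "z ^ n = of_int (b ^ n * m ^ (n - 1)) / of_int (p ^ n)"
    by (simp add: z_def \<alpha> power_divide power_mult_distrib)
  hence "z ^ n \<in> \<rat>" by simp
  moreover have "algebraic_int (z ^ n)" using int by (simp add: z_def algebraic_int_power)
  ultimately have "z ^ n \<in> \<int>" by (intro rational_algebraic_int_is_int)
  then obtain N where "z ^ n = of_int N" by (elim Ints_cases)
  with z_pow have "(of_int (b ^ n * m ^ (n - 1)) :: 'a) = of_int (p ^ n * N)"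
    using p(1) by (simp add: field_simps)
  hence "b ^ n * m ^ (n - 1) = p ^ n * N" by (simp only: of_int_eq_iff)
  also have "p ^ n = p ^ (n - 1) * p" using n by (simp flip: power_Suc2)
  finally have "p ^ (n - 1) * (b ^ n * u ^ (n - 1)) = p ^ (n - 1) * (p * N)"
    by (simp add: u power_mult_distrib mult_ac)
  hence "p dvd b ^ n * u ^ (n - 1)" using p(1) by simp
  thus "p dvd b" using p(1) \<open>\<not> p dvd u\<close> by (meson prime_dvd_mult_iff prime_dvd_power)
qed

text \<open>For the least j with p not dividing a_j, multiplying by alpha^(n-1-j) makes every other
  term integral (the earlier ones are divisible by p, the later ones pick up alpha^n = m), which
  leaves a_j alpha^(n-1) / p integral.\<close>

lemma prime_dvd_coeffs_if_algebraic_int: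
  fixes \<alpha> :: "'a :: field_char_0" and a :: "nat \<Rightarrow> int" and m p :: int
  assumes \<alpha>: "\<alpha> ^ n = of_int m" and p: "prime p" "p dvd m" "\<not> p\<^sup>2 dvd m"
    and int: "algebraic_int ((\<Sum>i<n. of_int (a i) * \<alpha> ^ i) / of_int p)"
  shows "i < n \<Longrightarrow> p dvd a i"
proof (induction i rule: less_induct)
  case (less j)
  have "n > 0" using less.prems by simp
  have \<alpha>_int: "algebraic_int \<alpha>" by (rule algebraic_int_pure_root[OF \<open>n > 0\<close> \<alpha>])
  obtain u where u: "m = p * u" using p(2) ..
  define e where "e k = k + (n - 1 - j)" for k
  define t where "t k = of_int (a k) * \<alpha> ^ e k / of_int p" for k
  have "\<alpha> ^ (n - 1 - j) * ((\<Sum>i<n. of_int (a i) * \<alpha> ^ i) / of_int p) = (\<Sum>k<n. t k)"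
    by (simp add: t_def e_def sum_distrib_left sum_divide_distrib power_add mult_ac)
  also have "\<dots> = t j + (\<Sum>k\<in>{..<n} - {j}. t k)"
    using less.prems by (simp add: sum.remove)
  finally have t_j: "t j = \<alpha> ^ (n - 1 - j) * ((\<Sum>i<n. of_int (a i) * \<alpha> ^ i) / of_int p)
      - (\<Sum>k\<in>{..<n} - {j}. t k)"
    by (simp add: algebra_simps)
  have "algebraic_int (t k)" if k: "k \<in> {..<n} - {j}" for k
  proof (cases "k < j")
    case True
    then obtain c where "a k = p * c" using less.IH less.prems by (meson dvdE order.strict_trans)
    hence "t k = of_int c * \<alpha> ^ e k" using p(1) by (simp add: t_def)
    thus ?thesis using \<alpha>_int by (simp add: algebraic_int_mult algebraic_int_power)
  next
    case False
    with k have "e k = n + (k - 1 - j)" by (auto simp: e_def)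
    hence "\<alpha> ^ e k = of_int p * of_int u * \<alpha> ^ (k - 1 - j)" by (simp add: power_add \<alpha> u)
    hence "t k = of_int (a k * u) * \<alpha> ^ (k - 1 - j)" using p(1) by (simp add: t_def)
    thus ?thesis using \<alpha>_int by (simp add: algebraic_int_mult algebraic_int_power)
  qed
  hence "algebraic_int (t j)"
    unfolding t_j using int \<alpha>_int by (intro algebraic_int_diff algebraic_int_mult algebraic_int_power algebraic_int_sum)
  moreover have "e j = n - 1" using less.prems by (simp add: e_def)
  ultimately show "p dvd a j"
    using prime_dvd_if_algebraic_int_root_power[OF \<open>n > 0\<close> \<alpha> p] by (simp add: t_def)
qed

lemma dvd_coeffs_if_algebraic_int:
  fixes \<alpha> :: "'a :: field_char_0" and a :: "nat \<Rightarrow> int" and d m :: int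
  assumes \<alpha>: "\<alpha> ^ n = of_int m" and m: "squarefree m"
    and d: "d \<noteq> 0" "\<And>p. prime p \<Longrightarrow> p dvd d \<Longrightarrow> p dvd m"
    and int: "algebraic_int ((\<Sum>i<n. of_int (a i) * \<alpha> ^ i) / of_int d)" and i: "i < n"
  shows "d dvd a i"
  using d int
proof (induction "nat \<bar>d\<bar>" arbitrary: d a rule: less_induct)
  case less
  show ?case
  proof (cases "is_unit d")
    case True
    thus ?thesis by (simp add: unit_imp_dvd)
  next
    case False
    with less.prems(1) obtain p where p: "prime p" "p dvd d" by (metis prime_divisor_exists)
    from p(2) obtain e where e: "d = p * e" ..
    have "e \<noteq> 0" and "\<not> is_unit p" and "p > 1"
      using e less.prems(1) p(1) by (auto simp: not_prime_unit prime_gt_1_int)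
    have "p dvd m" using less.prems(2) p by blast
    moreover have "\<not> p\<^sup>2 dvd m" using squarefreeD[OF m, of p] \<open>\<not> is_unit p\<close> by blast
    moreover have "algebraic_int (of_int e * ((\<Sum>i<n. of_int (a i) * \<alpha> ^ i) / of_int d))"
      by (rule algebraic_int_mult[OF algebraic_int_of_int less.prems(3)])
    hence "algebraic_int ((\<Sum>i<n. of_int (a i) * \<alpha> ^ i) / of_int p)"
      using \<open>e \<noteq> 0\<close> by (simp add: e)
    ultimately have p_dvd: "p dvd a i" if "i < n" for i
      using prime_dvd_coeffs_if_algebraic_int[OF \<alpha> p(1)] that by blast
    define b where "b i = a i div p" for i
    have b: "a i = p * b i" if "i < n" for i using p_dvd[OF that] by (simp add: b_def)
    have "(\<Sum>i<n. of_int (a i) * \<alpha> ^ i) = of_int p * (\<Sum>i<n. of_int (b i) * \<alpha> ^ i)"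
      unfolding sum_distrib_left by (intro sum.cong refl) (simp add: b mult.assoc)
    hence "algebraic_int ((\<Sum>i<n. of_int (b i) * \<alpha> ^ i) / of_int e)"
      using less.prems(3) p(1) by (simp add: e)
    moreover have "nat \<bar>e\<bar> < nat \<bar>d\<bar>"
      using e \<open>e \<noteq> 0\<close> \<open>p > 1\<close> by (simp add: abs_mult)
    moreover have "q dvd m" if "prime q" "q dvd e" for q using less.prems(2) that e by simp
    ultimately have "e dvd b i" using less.hyps[of e b] \<open>e \<noteq> 0\<close> i by blast
    thus ?thesis using b i e by simp
  qed
qed

lemma sum_powers_in_int_adjoin:
  fixes \<alpha> :: complex and b :: "nat \<Rightarrow> int"
  shows "(\<Sum>i<n. of_int (b i) * \<alpha> ^ i) \<in> int_adjoin \<alpha>"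
  unfolding int_adjoin_def
  by (intro CollectI exI[of _ "\<Sum>i<n. Polynomial.monom (b i) i"])
    (simp add: of_int_poly_hom.hom_sum poly_sum poly_monom)

lemma gcd_scaled_in_int_adjoin:
  fixes \<alpha> :: complex and a :: "nat \<Rightarrow> int" and m :: int
  assumes \<alpha>: "\<alpha> ^ n = of_int m" and m: "squarefree m" and n: "n > 0"
    and x: "x = (\<Sum>i<n. of_int (a i) * \<alpha> ^ i) / (of_nat n * of_int m)" and int: "algebraic_int x"
  shows "of_int (int n div gcd (int n) m) * x \<in> int_adjoin \<alpha>"
proof -
  define g where "g = gcd (int n) m"
  have "m \<noteq> 0" using m by auto
  have "g dvd int n" "g dvd m" "g \<noteq> 0" using \<open>m \<noteq> 0\<close> by (simp_all add: g_def)
  then obtain N where N: "int n = g * N" by blast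
  with n have "N \<noteq> 0" by auto
  have "int n div g = N" using \<open>g \<noteq> 0\<close> by (simp add: N)
  moreover have "of_nat n = (of_int (g * N) :: complex)" by (metis N of_int_of_nat_eq)
  ultimately have y: "of_int (int n div g) * x = (\<Sum>i<n. of_int (a i) * \<alpha> ^ i) / of_int (g * m)"
    using \<open>g \<noteq> 0\<close> \<open>N \<noteq> 0\<close> \<open>m \<noteq> 0\<close> by (simp add: x)
  have y_int: "algebraic_int ((\<Sum>i<n. of_int (a i) * \<alpha> ^ i) / of_int (g * m))"
    unfolding y[symmetric] using int by (intro algebraic_int_mult algebraic_int_of_int)
  have prime_dvd: "p dvd m" if "prime p" "p dvd g * m" for p
    using that \<open>g dvd m\<close> prime_dvd_mult_iff dvd_trans by metis
  have "g * m \<noteq> 0" using \<open>g \<noteq> 0\<close> \<open>m \<noteq> 0\<close> by simp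
  have "g * m dvd a i" if "i < n" for i
    by (rule dvd_coeffs_if_algebraic_int[OF \<alpha> m \<open>g * m \<noteq> 0\<close> prime_dvd y_int that])
  hence "of_int (int n div g) * x = (\<Sum>i<n. of_int (a i div (g * m)) * \<alpha> ^ i)"
    using \<open>g \<noteq> 0\<close> \<open>m \<noteq> 0\<close> by (simp add: y sum_divide_distrib of_int_div)
  thus ?thesis by (simp add: g_def sum_powers_in_int_adjoin)
qed

theorem theorem2p3:
  fixes n :: nat and m :: int and \<alpha> :: complex
  assumes "n \<ge> 2" and "squarefree m" and "m \<noteq> 1" and "m \<noteq> -1"
    and "\<alpha> ^ n = of_int m"
  shows "(\<lambda>x. of_int (int n div gcd (int n) m) * x) ` ring_of_integers \<alpha> \<subseteq> int_adjoin \<alpha>"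
proof
  fix y assume "y \<in> (\<lambda>x. of_int (int n div gcd (int n) m) * x) ` ring_of_integers \<alpha>"
  then obtain x where y: "y = of_int (int n div gcd (int n) m) * x" and x: "x \<in> ring_of_integers \<alpha>"
    by blast
  have n: "n > 0" and m: "m \<noteq> 0" and "\<not> is_unit m" using assms(1-4) by auto
  hence irr: "irreducible (pure_poly n (of_int m) :: rat poly)"
    using irreducible_pure_poly_rat assms(2) by blast
  obtain a where "x = (\<Sum>i<n. of_int (a i) * \<alpha> ^ i) / (of_nat n * of_int m)"
    using ring_of_integers_pure_rep[OF n m irr assms(5) x] by blast
  moreover have "algebraic_int x" using x by (simp add: ring_of_integers_def)
  ultimately show "y \<in> int_adjoin \<alpha>"
    unfolding y by (rule gcd_scaled_in_int_adjoin[OF assms(5,2) n])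
qed

end
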